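(* Let $\phi$ be a singular-expansive flow of a compact metric space $X$. Then for every compact invariant set $\Lambda\subset X$ with $\Lambda\cap Sing(\phi)=\emptyset$, the restricted flow $\phi|_\Lambda$ is expansive.
   Context: A flow is a continuous $\phi:\mathbb{R}\times X\to X$ with $\phi_0=\mathrm{id}$, $\phi_{t+s}=\phi_t\circ\phi_s$; $\phi_I(x)=\{\phi_t(x):t\in I\}$; $Sing(\phi)$ is the set of fixed points; $dist(z,A)=\inf_{a\in A}d(z,a)$, with $dist(z,\emptyset)=diam(X)$; $\Lambda$ invariant means $\phi_t(\Lambda)=\Lambda$ for all $t$. $\phi$ is singular-expansive if for every $\epsilon>0$ there is $\delta>0$ such that whenever $x,y\in X$ and an increasing homeomorphism $s:\mathbb{R}\to\mathbb{R}$ satisfy $d(\phi_t(x),\phi_{s(t)}(y))\le\delta\,dist(\phi_t(x),Sing(\phi))$ for all $t$, then $\phi_{s(t_0)}(y)\in\phi_{[t_0-\epsilon,t_0+\epsilon]}(x)$ for some $t_0\in\mathbb{R}$. A flow $\psi$ on a compact metric space $Y$ is expansive if for every $\epsilon>0$ there is $\delta>0$ such that whenever $x,y\in Y$ and a continuous $s:\mathbb{R}\to\mathbb{R}$ with $s(0)=0$ satisfy $d(\psi_t(x),\psi_{s(t)}(y))\le\delta$ for all $t$, then $y\in\psi_{[-\epsilon,\epsilon]}(x)$. *)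

theory Defs
  imports "HOL-Analysis.Analysis"
begin

definition is_flow :: "'a::metric_space set \<Rightarrow> (real \<Rightarrow> 'a \<Rightarrow> 'a) \<Rightarrow> bool" where
  "is_flow X phi \<longleftrightarrow>
     continuous_on (UNIV \<times> X) (\<lambda>(t, x). phi t x) \<and>
     (\<forall>t. \<forall>x\<in>X. phi t x \<in> X) \<and>
     (\<forall>x\<in>X. phi 0 x = x) \<and>
     (\<forall>t s. \<forall>x\<in>X. phi (t + s) x = phi t (phi s x))"

definition Sing :: "'a set \<Rightarrow> (real \<Rightarrow> 'a \<Rightarrow> 'a) \<Rightarrow> 'a set" where
  "Sing X phi = {x \<in> X. \<forall>t. phi t x = x}"

definition distX :: "'a::metric_space set \<Rightarrow> 'a \<Rightarrow> 'a set \<Rightarrow> real" where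
  "distX X z A = (if A = {} then diameter X else infdist z A)"

definition singular_expansive :: "'a::metric_space set \<Rightarrow> (real \<Rightarrow> 'a \<Rightarrow> 'a) \<Rightarrow> bool" where
  "singular_expansive X phi \<longleftrightarrow>
     (\<forall>\<epsilon>>0. \<exists>\<delta>>0. \<forall>x\<in>X. \<forall>y\<in>X. \<forall>s::real \<Rightarrow> real.
        (mono s \<and> (\<exists>g. homeomorphism UNIV UNIV s g) \<and>
         (\<forall>t. dist (phi t x) (phi (s t) y) \<le> \<delta> * distX X (phi t x) (Sing X phi)))
        \<longrightarrow> (\<exists>t0. phi (s t0) y \<in> (\<lambda>t. phi t x) ` {t0 - \<epsilon> .. t0 + \<epsilon>}))"

definition expansive_flow :: "'a::metric_space set \<Rightarrow> (real \<Rightarrow> 'a \<Rightarrow> 'a) \<Rightarrow> bool" where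
  "expansive_flow Y psi \<longleftrightarrow>
     (\<forall>\<epsilon>>0. \<exists>\<delta>>0. \<forall>x\<in>Y. \<forall>y\<in>Y. \<forall>s::real \<Rightarrow> real.
        (continuous_on UNIV s \<and> s 0 = 0 \<and> (\<forall>t. dist (psi t x) (psi (s t) y) \<le> \<delta>))
        \<longrightarrow> y \<in> (\<lambda>t. psi t x) ` {-\<epsilon> .. \<epsilon>})"

end

theory Submission
  imports Defs
begin

text \<open>On a compact invariant set \<open>\<Lambda>\<close> without singularities the distance to \<open>Sing\<close> is bounded
  below, so the bound \<open>\<delta> \<cdot> dist(\<phi>\<^sub>t x, Sing)\<close> of singular expansiveness may be replaced by a
  constant, and compactness rules out arbitrarily short periods.  What remains is to pass from
  the continuous time changes \<open>s\<close> of expansiveness to the increasing homeomorphisms of singular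
  expansiveness.  If the orbits of \<open>x\<close> and \<open>y\<close> stay \<open>\<delta>\<close>-close under \<open>s\<close>, then \<open>s\<close> is almost a
  translation on short intervals, since otherwise some point would be moved little by a short
  nonzero time; averaging \<open>s\<close> over such intervals yields an increasing homeomorphism \<open>h\<close> close
  to \<open>s\<close>.  Singular expansiveness then gives \<open>y = \<phi>\<^sub>r x\<close>, and the lag \<open>h t + r - t\<close> never
  reaches \<open>\<plusminus>c\<close> (no point has period \<open>c\<close>), so it stays small, whence \<open>|r| \<le> \<epsilon>\<close>.\<close>

lemma abs_less_on_connected:
  fixes f :: "'a::topological_space \<Rightarrow> real"
  assumes "connected S" and "continuous_on S f" and "t0 \<in> S" and "\<bar>f t0\<bar> < c"
    and "\<And>u. u \<in> S \<Longrightarrow> \<bar>f u\<bar> \<noteq> c" and "t \<in> S"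
  shows "\<bar>f t\<bar> < c"
proof (rule ccontr)
  assume "\<not> \<bar>f t\<bar> < c"
  have "connected ((\<lambda>u. \<bar>f u\<bar>) ` S)"
    using assms(1,2) by (intro connected_continuous_image continuous_intros)
  then have "c \<in> (\<lambda>u. \<bar>f u\<bar>) ` S"
    unfolding connected_iff_interval using assms(3,4,6) \<open>\<not> \<bar>f t\<bar> < c\<close>
    by (metis image_eqI less_imp_le not_less)
  then show False using assms(5) by auto
qed

lemma expanding_imp_mono_homeomorphism:
  fixes h :: "real \<Rightarrow> real"
  assumes cont: "continuous_on UNIV h" and k: "k > 0"
    and expand: "\<And>a b. a \<le> b \<Longrightarrow> k * (b - a) \<le> h b - h a"
  shows "mono h \<and> (\<exists>g. homeomorphism UNIV UNIV h g)"
proof -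
  have expand_abs: "k * \<bar>b - a\<bar> \<le> \<bar>h b - h a\<bar>" for a b
    using expand[of a b] expand[of b a] by (cases "a \<le> b") (auto simp: algebra_simps)
  have "inj h"
  proof (rule injI)
    fix x y assume "h x = h y"
    then have "k * \<bar>x - y\<bar> \<le> 0" using expand_abs[of x y] by simp
    then show "x = y" using k by (simp add: mult_le_0_iff)
  qed
  have "surj h"
  proof (rule surjI[of _ "\<lambda>y. SOME x. h x = y"], rule someI_ex)
    fix y
    define M where "M = \<bar>y - h 0\<bar> / k"
    have "M \<ge> 0" and "k * M = \<bar>y - h 0\<bar>" using k by (simp_all add: M_def)
    then have "h (-M) \<le> y" "y \<le> h M"
      using expand[of "-M" 0] expand[of 0 M] by auto
    then show "\<exists>x. h x = y"
      using IVT'[of h "-M" y M] \<open>M \<ge> 0\<close> continuous_on_subset[OF cont] by auto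
  qed
  have "(1/k)-lipschitz_on UNIV (inv h)"
  proof (rule lipschitz_onI)
    fix x y :: real
    have "k * \<bar>inv h x - inv h y\<bar> \<le> \<bar>x - y\<bar>"
      using expand_abs[of "inv h x" "inv h y"] by (simp add: surj_f_inv_f[OF \<open>surj h\<close>])
    then show "dist (inv h x) (inv h y) \<le> 1 / k * dist x y"
      using k by (simp add: dist_real_def field_simps)
  qed (use k in auto)
  then have "homeomorphism UNIV UNIV h (inv h)"
    using cont \<open>inj h\<close> \<open>surj h\<close>
    by (intro homeomorphismI) (auto intro: lipschitz_on_continuous_on surj_f_inv_f)
  moreover have "mono h"
    using expand k by (intro monoI) (smt (verit) mult_nonneg_nonneg)
  ultimately show ?thesis by blast
qed

lemma exists_real_antiderivative:
  fixes s :: "real \<Rightarrow> real"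
  assumes "continuous_on UNIV s"
  obtains S where "\<And>x. (S has_real_derivative s x) (at x)"
proof -
  have "\<exists>F. \<forall>x::real. -\<infinity> < ereal x \<longrightarrow> ereal x < \<infinity> \<longrightarrow> (F has_vector_derivative s x) (at x)"
    by (rule einterval_antiderivative) (use assms in \<open>auto simp: continuous_on_eq_continuous_at\<close>)
  then show ?thesis
    using that by (auto simp: has_real_derivative_iff_has_vector_derivative)
qed

lemma mono_homeomorphism_near_almost_translation:
  fixes s :: "real \<Rightarrow> real"
  assumes "continuous_on UNIV s" and "0 < c" and "c < T"
    and near: "\<And>t a. 0 \<le> a \<Longrightarrow> a \<le> T \<Longrightarrow> \<bar>s (t + a) - s t - a\<bar> < c"
  obtains h where "mono h" and "\<exists>g. homeomorphism UNIV UNIV h g" and "\<And>t. \<bar>h t - s t\<bar> \<le> c"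
proof -
  obtain S where S: "\<And>x. (S has_real_derivative s x) (at x)"
    using exists_real_antiderivative assms(1) by blast
  have T: "T > 0" using assms(2,3) by linarith
  \<comment> \<open>\<open>h t\<close> is the mean of \<open>s\<close> over \<open>[t, t + T]\<close>, shifted by \<open>-T/2\<close>\<close>
  define h where "h t = (S (t + T) - S t) / T - T / 2" for t
  have dh: "(h has_real_derivative (s (t + T) - s t) / T) (at t)" for t
    unfolding h_def using T
    by (auto intro!: derivative_eq_intros DERIV_chain2[OF S] simp: field_simps)
  have near_h: "\<bar>h t - s t\<bar> \<le> c" for t
  proof -
    define \<psi> where "\<psi> a = S (t + a) - S t - a * s t - a\<^sup>2 / 2" for a
    have "(\<psi> has_real_derivative (s (t + a) - s t - a)) (at a)" for a
      unfolding \<psi>_def by (auto intro!: derivative_eq_intros DERIV_chain2[OF S] simp: field_simps)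
    then obtain z where z: "0 < z" "z < T" "\<psi> T - \<psi> 0 = (T - 0) * (s (t + z) - s t - z)"
      using MVT2[OF T, of \<psi> "\<lambda>a. s (t + a) - s t - a"] by blast
    have "\<psi> T - \<psi> 0 = T * (h t - s t)"
      unfolding \<psi>_def h_def using T by (simp add: field_simps power2_eq_square)
    with z T have "h t - s t = s (t + z) - s t - z" by simp
    then show ?thesis using near[of z t] z by simp
  qed
  have "(T - c) / T * (b - a) \<le> h b - h a" if "a \<le> b" for a b
  proof (cases "a = b")
    case False
    then obtain z where z: "a < z" "z < b" "h b - h a = (b - a) * ((s (z + T) - s z) / T)"
      using MVT2[of a b h] dh \<open>a \<le> b\<close> by fastforce
    have "(T - c) / T \<le> (s (z + T) - s z) / T"
      using near[of T z] T by (intro divide_right_mono) auto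
    then have "(T - c) / T * (b - a) \<le> (s (z + T) - s z) / T * (b - a)"
      using \<open>a \<le> b\<close> by (intro mult_right_mono) auto
    with z(3) show ?thesis by (metis mult.commute)
  qed simp
  moreover have "continuous_on UNIV h"
    using dh by (meson DERIV_isCont continuous_at_imp_continuous_on)
  ultimately have "mono h \<and> (\<exists>g. homeomorphism UNIV UNIV h g)"
    using expanding_imp_mono_homeomorphism[of h "(T - c) / T"] assms(3) T by auto
  with near_h that show ?thesis by blast
qed

lemma tendsto_floor_divide_mult:
  fixes b :: "nat \<Rightarrow> real"
  assumes "b \<longlonglongrightarrow> 0" and "\<And>n. b n > 0"
  shows "(\<lambda>n. of_int \<lfloor>t / b n\<rfloor> * b n) \<longlonglongrightarrow> t"
proof (rule tendsto_sandwich[of "\<lambda>n. t - b n" _ _ "\<lambda>n. t"])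
  have "t - b n \<le> of_int \<lfloor>t / b n\<rfloor> * b n \<and> of_int \<lfloor>t / b n\<rfloor> * b n \<le> t" for n
  proof -
    have "b n * of_int \<lfloor>t / b n\<rfloor> \<le> b n * (t / b n)"
      using assms(2)[of n] by (intro mult_left_mono) auto
    moreover have "b n * (t / b n - 1) \<le> b n * of_int \<lfloor>t / b n\<rfloor>"
      using assms(2)[of n] by (intro mult_left_mono) linarith+
    ultimately show ?thesis
      using assms(2)[of n] by (simp add: algebra_simps)
  qed
  then show "\<forall>\<^sub>F n in sequentially. t - b n \<le> of_int \<lfloor>t / b n\<rfloor> * b n"
    and "\<forall>\<^sub>F n in sequentially. of_int \<lfloor>t / b n\<rfloor> * b n \<le> t"
    by simp_all
  show "(\<lambda>n. t - b n) \<longlonglongrightarrow> t"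
    using tendsto_diff[OF tendsto_const assms(1)] by simp
qed simp

locale continuous_flow =
  fixes X :: "'a::metric_space set" and phi :: "real \<Rightarrow> 'a \<Rightarrow> 'a"
  assumes is_flow: "is_flow X phi"
begin

lemma flow_add: "x \<in> X \<Longrightarrow> phi (a + b) x = phi a (phi b x)"
  using is_flow unfolding is_flow_def by blast

lemma flow_zero: "x \<in> X \<Longrightarrow> phi 0 x = x"
  using is_flow unfolding is_flow_def by blast

lemma flow_mem: "x \<in> X \<Longrightarrow> phi t x \<in> X"
  using is_flow unfolding is_flow_def by blast

lemma flow_cancel: "x \<in> X \<Longrightarrow> phi a (phi (-a) x) = x"
  using flow_add[of x a "-a"] flow_zero by simp

lemma flow_eq_imp_on_orbit:
  assumes "x \<in> X" and "y \<in> X" and "phi a y = phi b x"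
  shows "y = phi (b - a) x"
  using flow_cancel[OF assms(2), of "-a"] flow_add[OF assms(1), of "-a" b] assms(3) by simp

lemma continuous_on_flow: "continuous_on (UNIV \<times> X) (\<lambda>(t, x). phi t x)"
  using is_flow unfolding is_flow_def by blast

lemma continuous_on_flow_map: "continuous_on X (phi t)"
proof -
  have "continuous_on X ((\<lambda>(t, x). phi t x) \<circ> Pair t)"
    by (intro continuous_on_compose continuous_intros continuous_on_subset[OF continuous_on_flow]) auto
  then show ?thesis by (simp add: o_def)
qed

lemma flow_periodic_int:
  assumes w: "w \<in> X" and period: "phi b w = w"
  shows "phi (of_int k * b) w = w"
proof -
  have nat: "phi (of_nat n * b) w = w" for n :: nat
  proof (induction n)
    case 0
    then show ?case using flow_zero w by simp
  next
    case (Suc n)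
    then show ?case using flow_add[OF w, of b "of_nat n * b"] period by (simp add: algebra_simps)
  qed
  show ?thesis
  proof (cases "k \<ge> 0")
    case True
    then show ?thesis using nat[of "nat k"] by simp
  next
    case False
    then show ?thesis
      using nat[of "nat (-k)"] flow_add[OF w, of "of_int k * b" "- of_int k * b"] flow_zero[OF w]
      by simp
  qed
qed

lemma closed_Sing:
  assumes "closed X"
  shows "closed (Sing X phi)"
proof -
  have "Sing X phi = (\<Inter>t. {x \<in> X. phi t x = x})"
    unfolding Sing_def by auto
  moreover have "closed {x \<in> X. dist (phi t x) x = 0}" for t
    by (intro continuous_closed_preimage_constant assms continuous_intros continuous_on_flow_map)
  ultimately show ?thesis by auto
qed

end

locale nonsingular_invariant_set = continuous_flow +
  fixes L :: "'a::metric_space set"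
  assumes L_subset: "L \<subseteq> X" and compact_L: "compact L"
    and invariant: "\<And>t. phi t ` L = L" and L_nonsingular: "L \<inter> Sing X phi = {}"
begin

lemma flow_mem_L: "x \<in> L \<Longrightarrow> phi t x \<in> L"
  using invariant by blast

lemma continuous_on_flow_L: "continuous_on (UNIV \<times> L) (\<lambda>(t, x). phi t x)"
  using L_subset by (intro continuous_on_subset[OF continuous_on_flow]) auto

lemma is_flow_L: "is_flow L phi"
  unfolding is_flow_def using L_subset flow_mem_L flow_zero flow_add continuous_on_flow_L
  by (simp add: subset_iff)

lemma flow_uniformly_continuous_L:
  assumes "e > 0"
  obtains d where "d > 0"
    and "\<And>t t' z z'. t \<in> {a..b} \<Longrightarrow> t' \<in> {a..b} \<Longrightarrow> z \<in> L \<Longrightarrow> z' \<in> L \<Longrightarrow>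
           \<bar>t - t'\<bar> < d \<Longrightarrow> dist z z' < d \<Longrightarrow> dist (phi t z) (phi t' z') < e"
proof -
  have "uniformly_continuous_on ({a..b} \<times> L) (\<lambda>(t, x). phi t x)"
    by (intro compact_uniformly_continuous compact_Times compact_L compact_Icc
        continuous_on_subset[OF continuous_on_flow_L]) auto
  then obtain d where "d > 0" and d: "\<forall>p\<in>{a..b} \<times> L. \<forall>p'\<in>{a..b} \<times> L.
      dist p' p < d \<longrightarrow> dist ((\<lambda>(t, x). phi t x) p') ((\<lambda>(t, x). phi t x) p) < e"
    unfolding uniformly_continuous_on_def using assms by blast
  show ?thesis
  proof (rule that[of "d / 2"])
    fix t t' z z'
    assume "t \<in> {a..b}" "t' \<in> {a..b}" "z \<in> L" "z' \<in> L" "\<bar>t - t'\<bar> < d / 2" "dist z z' < d / 2"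
    moreover have "dist (t, z) (t', z') < d"
      using sqrt_sum_squares_le_sum[of "dist t t'" "dist z z'"] \<open>\<bar>t - t'\<bar> < d / 2\<close> \<open>dist z z' < d / 2\<close>
      by (simp add: dist_Pair_Pair dist_real_def)
    ultimately show "dist (phi t z) (phi t' z') < e"
      using d by (auto simp: dist_commute)
  qed (use \<open>d > 0\<close> in auto)
qed

text \<open>Otherwise points of ever shorter period accumulate at a point of \<open>L\<close> which, by continuity,
  is fixed by every \<open>phi t\<close>.\<close>
lemma positive_min_period:
  obtains \<tau> where "\<tau> > 0" and "\<And>w b. w \<in> L \<Longrightarrow> 0 < b \<Longrightarrow> b \<le> \<tau> \<Longrightarrow> phi b w \<noteq> w"
proof (rule ccontr)
  assume "\<not> thesis"
  then have "\<exists>w\<in>L. \<exists>b. 0 < b \<and> b \<le> 1 / (real n + 1) \<and> phi b w = w" for n :: nat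
    using that[of "1 / (real n + 1)"] by force
  then obtain w b where wb: "\<And>n. w n \<in> L" "\<And>n. 0 < b n" "\<And>n. b n \<le> 1 / (real n + 1)"
    and period: "\<And>n. phi (b n) (w n) = w n"
    by metis
  obtain l r where l: "l \<in> L" "strict_mono r" "(w \<circ> r) \<longlonglongrightarrow> l"
    using compact_L wb(1) unfolding compact_eq_seq_compact_metric seq_compact_def by meson
  have b_to_0: "(\<lambda>n. b (r n)) \<longlonglongrightarrow> 0"
  proof (rule tendsto_sandwich[of "\<lambda>n. 0" _ _ "\<lambda>n. 1 / (real n + 1)"])
    show "\<forall>\<^sub>F n in sequentially. b (r n) \<le> 1 / (real n + 1)"
    proof (rule always_eventually, rule allI)
      fix n
      have "1 / (real (r n) + 1) \<le> 1 / (real n + 1)"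
        using seq_suble[OF l(2), of n] by (intro divide_left_mono) auto
      then show "b (r n) \<le> 1 / (real n + 1)" using wb(3)[of "r n"] by linarith
    qed
    show "(\<lambda>n. 1 / (real n + 1)) \<longlonglongrightarrow> 0"
      using LIMSEQ_inverse_real_of_nat by (simp add: inverse_eq_divide add.commute)
  qed (use wb(2) in \<open>auto simp: less_imp_le\<close>)
  have "phi t l = l" for t
  proof -
    define q where "q n = of_int \<lfloor>t / b (r n)\<rfloor> * b (r n)" for n
    have "q \<longlonglongrightarrow> t"
      unfolding q_def using b_to_0 wb(2) by (rule tendsto_floor_divide_mult)
    moreover have "(\<lambda>n. w (r n)) \<longlonglongrightarrow> l"
      using l(3) by (simp add: o_def)
    ultimately have "(\<lambda>n. (q n, w (r n))) \<longlonglongrightarrow> (t, l)"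
      by (rule tendsto_Pair)
    then have "(\<lambda>n. phi (q n) (w (r n))) \<longlonglongrightarrow> phi t l"
      using continuous_on_tendsto_compose[OF continuous_on_flow_L] l(1) wb(1) by fastforce
    moreover have "phi (q n) (w (r n)) = w (r n)" for n
      unfolding q_def using flow_periodic_int[OF _ period] wb(1) L_subset by blast
    ultimately show ?thesis
      using l(3) LIMSEQ_unique by (auto simp: o_def)
  qed
  then show False
    using l(1) L_subset L_nonsingular unfolding Sing_def by auto
qed

lemma distX_Sing_bounded_below:
  assumes "compact X"
  obtains \<kappa> where "\<kappa> > 0" and "\<And>z. z \<in> L \<Longrightarrow> \<kappa> \<le> distX X z (Sing X phi)"
proof (cases "L = {}")
  case False
  show ?thesis
  proof (cases "Sing X phi = {}")
    case True
    obtain w where "w \<in> L" using False by blast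
    then obtain t where "phi t w \<noteq> w"
      using L_nonsingular L_subset unfolding Sing_def by blast
    moreover have "dist (phi t w) w \<le> diameter X"
      using assms \<open>w \<in> L\<close> L_subset flow_mem
      by (intro diameter_bounded_bound compact_imp_bounded) auto
    ultimately have "diameter X > 0"
      by (metis dist_pos_lt order_less_le_trans)
    then show ?thesis
      using that[of "diameter X"] True by (simp add: distX_def)
  next
    case nonempty: False
    have "continuous_on L (\<lambda>z. infdist z (Sing X phi))"
      by (intro continuous_intros)
    then obtain z0 where z0: "z0 \<in> L"
      and min: "\<And>z. z \<in> L \<Longrightarrow> infdist z0 (Sing X phi) \<le> infdist z (Sing X phi)"
      using continuous_attains_inf[OF compact_L False] by blast
    have "infdist z0 (Sing X phi) > 0"
      using closed_Sing[OF compact_imp_closed[OF assms]] nonempty z0 L_nonsingular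
      by (intro infdist_pos_not_in_closed) auto
    then show ?thesis
      using that[of "infdist z0 (Sing X phi)"] min nonempty by (simp add: distX_def)
  qed
qed (use that[of 1] in auto)

lemma displacement_bounded_below:
  assumes "\<And>w. w \<in> L \<Longrightarrow> phi c w \<noteq> w"
  obtains m where "m > 0" and "\<And>w. w \<in> L \<Longrightarrow> m \<le> dist (phi c w) w \<and> m \<le> dist (phi (-c) w) w"
proof (cases "L = {}")
  case False
  have "continuous_on L (\<lambda>w. dist (phi c w) w)"
    by (intro continuous_intros continuous_on_subset[OF continuous_on_flow_map L_subset])
  then obtain w0 where w0: "w0 \<in> L" and min: "\<And>w. w \<in> L \<Longrightarrow> dist (phi c w0) w0 \<le> dist (phi c w) w"
    using continuous_attains_inf[OF compact_L False] by blast
  have "dist (phi (-c) w) w = dist (phi c (phi (-c) w)) (phi (-c) w)" if "w \<in> L" for w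
    using flow_cancel[of w c] that L_subset by (auto simp: dist_commute)
  then show ?thesis
    using that[of "dist (phi c w0) w0"] assms[OF w0] min flow_mem_L by auto
qed (use that[of 1] in auto)

lemma time_lag_stays_below:
  assumes displacement: "\<And>w. w \<in> L \<Longrightarrow> m \<le> dist (phi c w) w \<and> m \<le> dist (phi (-c) w) w"
    and "connected S" and "continuous_on S g"
    and near: "\<And>u. u \<in> S \<Longrightarrow> w u \<in> L \<and> dist (phi (g u) (w u)) (w u) < m"
    and "t0 \<in> S" and "\<bar>g t0\<bar> < c" and "t \<in> S"
  shows "\<bar>g t\<bar> < c"
proof -
  have "\<bar>g u\<bar> \<noteq> c" if "u \<in> S" for u
    using near[OF that] displacement[of "w u"] by (cases "g u \<ge> 0") auto
  then show ?thesis
    using abs_less_on_connected assms(2,3,5-7) by blast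
qed

lemma time_change_near_translation:
  assumes "c > 0" and no_period: "\<And>w. w \<in> L \<Longrightarrow> phi c w \<noteq> w"
  obtains \<delta> where "\<delta> > 0"
    and "\<And>x y s t a. x \<in> L \<Longrightarrow> y \<in> L \<Longrightarrow> continuous_on UNIV s \<Longrightarrow>
           (\<And>t. dist (phi t x) (phi (s t) y) \<le> \<delta>) \<Longrightarrow> 0 \<le> a \<Longrightarrow> a \<le> T \<Longrightarrow>
           \<bar>s (t + a) - s t - a\<bar> < c"
proof -
  obtain m where "m > 0" and displacement: "\<And>w. w \<in> L \<Longrightarrow> m \<le> dist (phi c w) w \<and> m \<le> dist (phi (-c) w) w"
    using displacement_bounded_below no_period by blast
  obtain d where "d > 0" and d: "\<And>t t' z z'. t \<in> {0..T} \<Longrightarrow> t' \<in> {0..T} \<Longrightarrow> z \<in> L \<Longrightarrow> z' \<in> L \<Longrightarrow>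
      \<bar>t - t'\<bar> < d \<Longrightarrow> dist z z' < d \<Longrightarrow> dist (phi t z) (phi t' z') < m / 2"
    using flow_uniformly_continuous_L[of "m / 2"] \<open>m > 0\<close> by (metis half_gt_zero)
  show ?thesis
  proof (rule that[of "min (d / 2) (m / 4)"])
    fix x y s t a
    assume x: "x \<in> L" and y: "y \<in> L" and "continuous_on UNIV s" "0 \<le> a" "a \<le> T"
      and close: "\<And>t. dist (phi t x) (phi (s t) y) \<le> min (d / 2) (m / 4)"
    \<comment> \<open>\<open>phi (g b)\<close> moves \<open>phi (s t + b) y\<close> to \<open>phi (s (t + b)) y\<close>; both are close to \<open>phi (t + b) x\<close>\<close>
    define g where "g b = s (t + b) - s t - b" for b
    have moved: "dist (phi (g b) (phi (s t + b) y)) (phi (s t + b) y) < m" if "b \<in> {0..a}" for b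
    proof -
      have "phi (g b) (phi (s t + b) y) = phi (s (t + b)) y"
        using flow_add[of y "g b" "s t + b"] y L_subset by (auto simp: g_def)
      moreover have "dist (phi (s (t + b)) y) (phi (s t + b) y) < m"
      proof -
        have "dist (phi (s (t + b)) y) (phi (t + b) x) \<le> m / 4"
          using close[of "t + b"] by (simp add: dist_commute)
        moreover have "dist (phi b (phi t x)) (phi b (phi (s t) y)) < m / 2"
          using close[of t] that \<open>a \<le> T\<close> x y \<open>d > 0\<close> by (intro d flow_mem_L) auto
        then have "dist (phi (t + b) x) (phi (s t + b) y) < m / 2"
          using flow_add[OF subsetD[OF L_subset x], of b t] flow_add[OF subsetD[OF L_subset y], of b "s t"]
          by (simp add: add.commute)
        ultimately show ?thesis
          using dist_triangle[of "phi (s (t + b)) y" "phi (s t + b) y" "phi (t + b) x"] \<open>m > 0\<close>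
          by linarith
      qed
      ultimately show ?thesis by simp
    qed
    have "continuous_on {0..a} (\<lambda>b. s (t + b))"
      by (rule continuous_on_compose2[OF \<open>continuous_on UNIV s\<close>]) (auto intro: continuous_intros)
    then have "continuous_on {0..a} g"
      unfolding g_def by (intro continuous_intros)
    moreover have "\<bar>g 0\<bar> < c"
      using \<open>c > 0\<close> by (simp add: g_def)
    ultimately have "\<bar>g a\<bar> < c"
    proof (intro time_lag_stays_below[OF displacement, of "{0..a}" g "\<lambda>b. phi (s t + b) y" 0 a])
      show "phi (s t + u) y \<in> L \<and> dist (phi (g u) (phi (s t + u) y)) (phi (s t + u) y) < m"
        if "u \<in> {0..a}" for u
        using moved[OF that] flow_mem_L[OF y] by blast
    qed (use \<open>0 \<le> a\<close> in auto)
    then show "\<bar>s (t + a) - s t - a\<bar> < c" by (simp add: g_def)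
  qed (use \<open>d > 0\<close> \<open>m > 0\<close> in auto)
qed

lemma time_lag_of_tracking_small:
  assumes "\<And>w. w \<in> L \<Longrightarrow> phi c w \<noteq> w"
  obtains \<beta> where "\<beta> > 0"
    and "\<And>x r h t0. x \<in> L \<Longrightarrow> continuous_on UNIV h \<Longrightarrow>
           (\<And>t. dist (phi t x) (phi (h t) (phi r x)) \<le> \<beta>) \<Longrightarrow> \<bar>h t0 + r - t0\<bar> < c \<Longrightarrow>
           \<bar>h 0 + r\<bar> < c"
proof -
  obtain m where "m > 0" and displacement: "\<And>w. w \<in> L \<Longrightarrow> m \<le> dist (phi c w) w \<and> m \<le> dist (phi (-c) w) w"
    using displacement_bounded_below assms by blast
  show ?thesis
  proof (rule that[of "m / 2"])
    fix x r h t0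
    assume x: "x \<in> L" and "continuous_on UNIV h" and "\<bar>h t0 + r - t0\<bar> < c"
      and close: "\<And>t. dist (phi t x) (phi (h t) (phi r x)) \<le> m / 2"
    define g where "g t = h t + r - t" for t
    have "phi (g t) (phi t x) = phi (h t) (phi r x)" for t
      using flow_add[OF subsetD[OF L_subset x], of "h t + r - t" t]
        flow_add[OF subsetD[OF L_subset x], of "h t" r]
      by (simp add: g_def)
    then have "dist (phi (g t) (phi t x)) (phi t x) < m" for t
      using close[of t] \<open>m > 0\<close> by (simp add: dist_commute)
    moreover have "continuous_on UNIV g"
      unfolding g_def using \<open>continuous_on UNIV h\<close> by (intro continuous_intros)
    ultimately have "\<bar>g 0\<bar> < c"
      using \<open>\<bar>h t0 + r - t0\<bar> < c\<close> flow_mem_L[OF x]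
      by (intro time_lag_stays_below[OF displacement, of UNIV g "\<lambda>t. phi t x" t0 0]) (auto simp: g_def)
    then show "\<bar>h 0 + r\<bar> < c" by (simp add: g_def)
  qed (use \<open>m > 0\<close> in auto)
qed

lemma homeomorphic_time_change_tracking:
  assumes "\<beta> > 0" and "\<eta> > 0"
  obtains \<delta> where "\<delta> > 0"
    and "\<And>x y s. x \<in> L \<Longrightarrow> y \<in> L \<Longrightarrow> continuous_on UNIV s \<Longrightarrow>
           (\<And>t. dist (phi t x) (phi (s t) y) \<le> \<delta>) \<Longrightarrow>
           \<exists>h. mono h \<and> (\<exists>g. homeomorphism UNIV UNIV h g) \<and> (\<forall>t. \<bar>h t - s t\<bar> \<le> \<eta>) \<and>
             (\<forall>t. dist (phi t x) (phi (h t) y) \<le> \<beta>)"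
proof -
  obtain d where "d > 0" and d: "\<And>t t' z z'. t \<in> {-1..1} \<Longrightarrow> t' \<in> {-1..1} \<Longrightarrow> z \<in> L \<Longrightarrow> z' \<in> L \<Longrightarrow>
      \<bar>t - t'\<bar> < d \<Longrightarrow> dist z z' < d \<Longrightarrow> dist (phi t z) (phi t' z') < \<beta> / 2"
    using flow_uniformly_continuous_L[of "\<beta> / 2" "-1" 1] \<open>\<beta> > 0\<close> by (metis half_gt_zero)
  obtain \<tau> where "\<tau> > 0" and \<tau>: "\<And>w b. w \<in> L \<Longrightarrow> 0 < b \<Longrightarrow> b \<le> \<tau> \<Longrightarrow> phi b w \<noteq> w"
    using positive_min_period by blast
  define c where "c = min (min (d / 2) 1) (min \<tau> \<eta>)"
  have "c > 0" "c \<le> \<eta>" and no_period_c: "\<And>w. w \<in> L \<Longrightarrow> phi c w \<noteq> w"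
    using \<open>d > 0\<close> \<open>\<tau> > 0\<close> \<open>\<eta> > 0\<close> \<tau> by (auto simp: c_def)
  have shift_small: "dist (phi r z) z < \<beta> / 2" if "z \<in> L" "\<bar>r\<bar> \<le> c" for r z
    using d[of r 0 z z] that \<open>d > 0\<close> flow_zero[OF subsetD[OF L_subset \<open>z \<in> L\<close>]]
    by (auto simp: c_def abs_le_iff)
  obtain \<delta> where "\<delta> > 0" and near: "\<And>x y s t a. x \<in> L \<Longrightarrow> y \<in> L \<Longrightarrow> continuous_on UNIV s \<Longrightarrow>
      (\<And>t. dist (phi t x) (phi (s t) y) \<le> \<delta>) \<Longrightarrow> 0 \<le> a \<Longrightarrow> a \<le> 3 * c \<Longrightarrow>
      \<bar>s (t + a) - s t - a\<bar> < c"
    using time_change_near_translation[OF \<open>c > 0\<close> no_period_c] by blast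
  show ?thesis
  proof (rule that[of "min \<delta> (\<beta> / 2)"])
    fix x y s
    assume x: "x \<in> L" and y: "y \<in> L" and "continuous_on UNIV s"
      and close: "\<And>t. dist (phi t x) (phi (s t) y) \<le> min \<delta> (\<beta> / 2)"
    have "dist (phi t x) (phi (s t) y) \<le> \<delta>" for t
      using close[of t] by simp
    then have "\<bar>s (t + a) - s t - a\<bar> < c" if "0 \<le> a" "a \<le> 3 * c" for t a
      using near[OF x y \<open>continuous_on UNIV s\<close>] that by blast
    moreover have "c < 3 * c" using \<open>c > 0\<close> by simp
    ultimately obtain h where "mono h" "\<exists>g. homeomorphism UNIV UNIV h g" and h_s: "\<And>t. \<bar>h t - s t\<bar> \<le> c"
      using mono_homeomorphism_near_almost_translation[OF \<open>continuous_on UNIV s\<close> \<open>c > 0\<close>] by blast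
    have "dist (phi t x) (phi (h t) y) \<le> \<beta>" for t
    proof -
      have "phi (h t) y = phi (h t - s t) (phi (s t) y)"
        using flow_add[OF subsetD[OF L_subset y], of "h t - s t" "s t"] by simp
      then have "dist (phi (h t) y) (phi (s t) y) < \<beta> / 2"
        using shift_small[OF flow_mem_L[OF y] h_s[of t]] by simp
      then show ?thesis
        using close[of t] dist_triangle[of "phi t x" "phi (h t) y" "phi (s t) y"]
        by (simp add: dist_commute)
    qed
    then show "\<exists>h. mono h \<and> (\<exists>g. homeomorphism UNIV UNIV h g) \<and> (\<forall>t. \<bar>h t - s t\<bar> \<le> \<eta>) \<and>
        (\<forall>t. dist (phi t x) (phi (h t) y) \<le> \<beta>)"
      using \<open>mono h\<close> \<open>\<exists>g. homeomorphism UNIV UNIV h g\<close> h_s \<open>c \<le> \<eta>\<close> by (meson order_trans)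
  qed (use \<open>\<delta> > 0\<close> \<open>\<beta> > 0\<close> in auto)
qed

lemma singular_expansive_uniform_L:
  assumes "compact X" and "singular_expansive X phi" and "e > 0"
  obtains \<beta> where "\<beta> > 0"
    and "\<And>x y h. x \<in> L \<Longrightarrow> y \<in> L \<Longrightarrow> mono h \<Longrightarrow> (\<exists>g. homeomorphism UNIV UNIV h g) \<Longrightarrow>
           (\<And>t. dist (phi t x) (phi (h t) y) \<le> \<beta>) \<Longrightarrow>
           \<exists>t0. phi (h t0) y \<in> (\<lambda>t. phi t x) ` {t0 - e .. t0 + e}"
proof -
  obtain \<delta> where "\<delta> > 0" and SE: "\<forall>x\<in>X. \<forall>y\<in>X. \<forall>h::real \<Rightarrow> real.
      (mono h \<and> (\<exists>g. homeomorphism UNIV UNIV h g) \<and>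
       (\<forall>t. dist (phi t x) (phi (h t) y) \<le> \<delta> * distX X (phi t x) (Sing X phi)))
      \<longrightarrow> (\<exists>t0. phi (h t0) y \<in> (\<lambda>t. phi t x) ` {t0 - e .. t0 + e})"
    using mp[OF spec[OF assms(2)[unfolded singular_expansive_def], of e] assms(3)] by blast
  obtain \<kappa> where "\<kappa> > 0" and \<kappa>: "\<And>z. z \<in> L \<Longrightarrow> \<kappa> \<le> distX X z (Sing X phi)"
    using distX_Sing_bounded_below[OF assms(1)] by blast
  show ?thesis
  proof (rule that[of "\<delta> * \<kappa>"])
    fix x y h
    assume x: "x \<in> L" and y: "y \<in> L" and "mono h" "\<exists>g. homeomorphism UNIV UNIV h g"
      and close: "\<And>t. dist (phi t x) (phi (h t) y) \<le> \<delta> * \<kappa>"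
    have "dist (phi t x) (phi (h t) y) \<le> \<delta> * distX X (phi t x) (Sing X phi)" for t
    proof -
      have "\<delta> * \<kappa> \<le> \<delta> * distX X (phi t x) (Sing X phi)"
        using \<kappa>[OF flow_mem_L[OF x]] \<open>\<delta> > 0\<close> by (intro mult_left_mono) auto
      then show ?thesis
        using close[of t] by linarith
    qed
    then show "\<exists>t0. phi (h t0) y \<in> (\<lambda>t. phi t x) ` {t0 - e .. t0 + e}"
      using SE x y L_subset \<open>mono h\<close> \<open>\<exists>g. homeomorphism UNIV UNIV h g\<close> by blast
  qed (use \<open>\<delta> > 0\<close> \<open>\<kappa> > 0\<close> in simp)
qed

lemma expansive_flow_L:
  assumes "compact X" and "singular_expansive X phi"
  shows "expansive_flow L phi"
  unfolding expansive_flow_def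
proof (intro allI impI)
  fix \<epsilon> :: real
  assume "\<epsilon> > 0"
  obtain \<tau> where "\<tau> > 0" and \<tau>: "\<And>w b. w \<in> L \<Longrightarrow> 0 < b \<Longrightarrow> b \<le> \<tau> \<Longrightarrow> phi b w \<noteq> w"
    using positive_min_period by blast
  define c where "c = min (\<epsilon> / 2) \<tau>"
  have "c > 0" "c \<le> \<epsilon> / 2" and no_period_c: "\<And>w. w \<in> L \<Longrightarrow> phi c w \<noteq> w"
    using \<open>\<epsilon> > 0\<close> \<open>\<tau> > 0\<close> \<tau> by (auto simp: c_def)
  obtain \<beta>1 where "\<beta>1 > 0" and lag: "\<And>x r h t0. x \<in> L \<Longrightarrow> continuous_on UNIV h \<Longrightarrow>
      (\<And>t. dist (phi t x) (phi (h t) (phi r x)) \<le> \<beta>1) \<Longrightarrow> \<bar>h t0 + r - t0\<bar> < c \<Longrightarrow> \<bar>h 0 + r\<bar> < c"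
    using time_lag_of_tracking_small[OF no_period_c] by blast
  obtain \<beta>2 where "\<beta>2 > 0" and SE: "\<And>x y h. x \<in> L \<Longrightarrow> y \<in> L \<Longrightarrow> mono h \<Longrightarrow>
      (\<exists>g. homeomorphism UNIV UNIV h g) \<Longrightarrow> (\<And>t. dist (phi t x) (phi (h t) y) \<le> \<beta>2) \<Longrightarrow>
      \<exists>t0. phi (h t0) y \<in> (\<lambda>t. phi t x) ` {t0 - c / 2 .. t0 + c / 2}"
    using singular_expansive_uniform_L[OF assms half_gt_zero[OF \<open>c > 0\<close>]] by blast
  obtain \<delta> where "\<delta> > 0" and tracking: "\<And>x y s. x \<in> L \<Longrightarrow> y \<in> L \<Longrightarrow> continuous_on UNIV s \<Longrightarrow>
      (\<And>t. dist (phi t x) (phi (s t) y) \<le> \<delta>) \<Longrightarrow>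
      \<exists>h. mono h \<and> (\<exists>g. homeomorphism UNIV UNIV h g) \<and> (\<forall>t. \<bar>h t - s t\<bar> \<le> \<epsilon> / 2) \<and>
        (\<forall>t. dist (phi t x) (phi (h t) y) \<le> min \<beta>1 \<beta>2)"
    using homeomorphic_time_change_tracking[of "min \<beta>1 \<beta>2" "\<epsilon> / 2"] \<open>\<beta>1 > 0\<close> \<open>\<beta>2 > 0\<close> \<open>\<epsilon> > 0\<close>
    by (metis half_gt_zero min_def)
  show "\<exists>\<delta>>0. \<forall>x\<in>L. \<forall>y\<in>L. \<forall>s.
      continuous_on UNIV s \<and> s 0 = 0 \<and> (\<forall>t. dist (phi t x) (phi (s t) y) \<le> \<delta>)
      \<longrightarrow> y \<in> (\<lambda>t. phi t x) ` {-\<epsilon>..\<epsilon>}"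
  proof (intro exI[of _ \<delta>] conjI ballI allI impI \<open>\<delta> > 0\<close>)
    fix x y s
    assume x: "x \<in> L" and y: "y \<in> L"
      and "continuous_on UNIV s \<and> s 0 = 0 \<and> (\<forall>t. dist (phi t x) (phi (s t) y) \<le> \<delta>)"
    then have "continuous_on UNIV s" "s 0 = 0" "\<And>t. dist (phi t x) (phi (s t) y) \<le> \<delta>"
      by auto
    then obtain h where "mono h" and homeo: "\<exists>g. homeomorphism UNIV UNIV h g"
      and h_s: "\<And>t. \<bar>h t - s t\<bar> \<le> \<epsilon> / 2"
      and h_close: "\<And>t. dist (phi t x) (phi (h t) y) \<le> min \<beta>1 \<beta>2"
      using tracking[OF x y] by blast
    then obtain t0 u where u: "u \<in> {t0 - c / 2 .. t0 + c / 2}" and "phi (h t0) y = phi u x"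
      using SE[OF x y \<open>mono h\<close> homeo] by fastforce
    define r where "r = u - h t0"
    have y_eq: "y = phi r x"
      using flow_eq_imp_on_orbit \<open>phi (h t0) y = phi u x\<close> x y L_subset unfolding r_def by blast
    have "continuous_on UNIV h" using homeo homeomorphism_def by blast
    moreover have "\<bar>h t0 + r - t0\<bar> < c" using u \<open>c > 0\<close> by (simp add: r_def abs_less_iff)
    moreover have "dist (phi t x) (phi (h t) (phi r x)) \<le> \<beta>1" for t
      using h_close[of t, unfolded y_eq] by simp
    ultimately have "\<bar>h 0 + r\<bar> < c"
      using lag[OF x] by blast
    then have "\<bar>r\<bar> \<le> \<epsilon>"
      using h_s[of 0] \<open>s 0 = 0\<close> \<open>c \<le> \<epsilon> / 2\<close> by linarith
    then show "y \<in> (\<lambda>t. phi t x) ` {-\<epsilon>..\<epsilon>}"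
      using y_eq by (auto simp: abs_le_iff)
  qed
qed

end

theorem mainTheorem15:
  fixes X :: "'a::metric_space set" and phi :: "real \<Rightarrow> 'a \<Rightarrow> 'a"
  assumes "compact X" and "is_flow X phi" and "singular_expansive X phi"
  shows "\<forall>\<Lambda>. \<Lambda> \<subseteq> X \<and> compact \<Lambda> \<and> (\<forall>t. phi t ` \<Lambda> = \<Lambda>) \<and> \<Lambda> \<inter> Sing X phi = {}
           \<longrightarrow> is_flow \<Lambda> phi \<and> expansive_flow \<Lambda> phi"
proof (intro allI impI)
  fix \<Lambda>
  assume "\<Lambda> \<subseteq> X \<and> compact \<Lambda> \<and> (\<forall>t. phi t ` \<Lambda> = \<Lambda>) \<and> \<Lambda> \<inter> Sing X phi = {}"
  then interpret nonsingular_invariant_set X phi \<Lambda>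
    using assms(2) by unfold_locales auto
  show "is_flow \<Lambda> phi \<and> expansive_flow \<Lambda> phi"
    using is_flow_L expansive_flow_L[OF assms(1,3)] by blast
qed

end
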